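(* Let $\mathcal{H}$ be a complex Hilbert space and $A,B,X\in\mathcal{B}(\mathcal{H})$. Then \[ \omega(A^{*}XB)\leq \frac{1}{4}\|AA^{*}X+XBB^{*}\|+\frac{1}{2}\,\omega\!\left(\begin{bmatrix} XBA^{*}&0\\ 0& BA^{*}X \end{bmatrix}\right), \] where the $2\times 2$ operator matrix acts on $\mathcal{H}\oplus\mathcal{H}$.
   Context: $\omega(T)=\sup\{|\langle Tx,x\rangle|:\|x\|=1\}$ denotes the numerical radius and $\|\cdot\|$ the operator norm. *)

theory Defs
  imports "HOL-Analysis.Analysis"
begin

class complex_inner = real_normed_vector +
  fixes scaleC :: "complex \<Rightarrow> 'a \<Rightarrow> 'a"
    and cinner :: "'a \<Rightarrow> 'a \<Rightarrow> complex"
  assumes scaleC_add_right: "scaleC c (x + y) = scaleC c x + scaleC c y"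
    and scaleC_add_left: "scaleC (c + d) x = scaleC c x + scaleC d x"
    and scaleC_scaleC: "scaleC c (scaleC d x) = scaleC (c * d) x"
    and scaleC_one: "scaleC 1 x = x"
    and scaleR_scaleC: "scaleR r x = scaleC (complex_of_real r) x"
    and cinner_commute: "cinner x y = cnj (cinner y x)"
    and cinner_add_left: "cinner (x + y) z = cinner x z + cinner y z"
    and cinner_scaleC_left: "cinner (scaleC c x) y = cnj c * cinner x y"
    and cinner_self_eq_zero: "cinner x x = 0 \<longleftrightarrow> x = 0"
    and norm_eq_sqrt_cinner: "norm x = sqrt (Re (cinner x x))"

class chilbert_space = complex_inner + complete_space

definition bounded_op :: "('a::complex_inner \<Rightarrow> 'a) \<Rightarrow> bool" where
  "bounded_op T \<longleftrightarrow> bounded_linear T \<and> (\<forall>c x. T (scaleC c x) = scaleC c (T x))"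

definition cadjoint :: "('a::complex_inner \<Rightarrow> 'a) \<Rightarrow> ('a \<Rightarrow> 'a)" where
  "cadjoint T = (THE S. \<forall>x y. cinner (T x) y = cinner x (S y))"

text \<open>Numerical radius  w(T) = sup { |<T x, x>| : ||x|| = 1 }.  (0 is inserted only so
that the supremum is also 0 on the trivial space, where there are no unit vectors;
all values are nonnegative, so this does not change anything otherwise.)\<close>
definition numerical_radius :: "('a::complex_inner \<Rightarrow> 'a) \<Rightarrow> real" where
  "numerical_radius T = Sup (insert 0 {cmod (cinner (T x) x) | x. norm x = 1})"

text \<open>The direct sum H (+) H, realised as the product type with the componentwise
complex structure and inner product <(x1,y1),(x2,y2)> = <x1,x2> + <y1,y2>.\<close>

instantiation prod :: (complex_inner, complex_inner) complex_inner
begin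

definition scaleC_prod_def:
  "scaleC c p = (scaleC c (fst p), scaleC c (snd p))"

definition cinner_prod_def:
  "cinner p q = cinner (fst p) (fst q) + cinner (snd p) (snd q)"

lemma cinner_self_Im: "Im (cinner x x) = 0" for x :: "'c::complex_inner"
  using cinner_commute[of x x] by (metis cnj.simps(2) neg_equal_zero)

lemma cinner_self_Re_nonneg: "Re (cinner x x) \<ge> 0" for x :: "'c::complex_inner"
proof (rule ccontr)
  assume "\<not> Re (cinner x x) \<ge> 0"
  then have "Re (cinner x x) < 0" by simp
  then have "sqrt (Re (cinner x x)) < 0" by simp
  then show False using norm_eq_sqrt_cinner[of x] norm_ge_zero[of x] by linarith
qed

lemma cinner_self_eq_norm2: "cinner x x = complex_of_real ((norm x)\<^sup>2)" for x :: "'c::complex_inner"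
  using cinner_self_Im[of x] cinner_self_Re_nonneg[of x] norm_eq_sqrt_cinner[of x]
  by (simp add: complex_eq_iff)

instance
proof
  fix c d :: complex and x y z :: "'a \<times> 'b" and r :: real
  show "scaleC c (x + y) = scaleC c x + scaleC c y"
    by (simp add: scaleC_prod_def scaleC_add_right)
  show "scaleC (c + d) x = scaleC c x + scaleC d x"
    by (simp add: scaleC_prod_def scaleC_add_left)
  show "scaleC c (scaleC d x) = scaleC (c * d) x"
    by (simp add: scaleC_prod_def scaleC_scaleC)
  show "scaleC 1 x = x"
    by (simp add: scaleC_prod_def scaleC_one)
  show "scaleR r x = scaleC (complex_of_real r) x"
    by (simp add: scaleC_prod_def scaleR_prod_def scaleR_scaleC)
  show "cinner x y = cnj (cinner y x)"
    by (simp add: cinner_prod_def cinner_commute[of "fst x"] cinner_commute[of "snd x"])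
  show "cinner (x + y) z = cinner x z + cinner y z"
    by (simp add: cinner_prod_def cinner_add_left)
  show "cinner (scaleC c x) y = cnj c * cinner x y"
    by (simp add: cinner_prod_def scaleC_prod_def cinner_scaleC_left algebra_simps)
  show "norm x = sqrt (Re (cinner x x))"
    by (simp add: cinner_prod_def norm_prod_def cinner_self_eq_norm2)
  show "cinner x x = 0 \<longleftrightarrow> x = 0"
  proof
    assume "cinner x x = 0"
    then have "complex_of_real ((norm (fst x))\<^sup>2 + (norm (snd x))\<^sup>2) = 0"
      by (simp add: cinner_prod_def cinner_self_eq_norm2)
    then have "(norm (fst x))\<^sup>2 + (norm (snd x))\<^sup>2 = 0" by (simp only: of_real_eq_0_iff)
    then have "norm (fst x) = 0 \<and> norm (snd x) = 0"
      by (simp add: add_nonneg_eq_0_iff)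
    then show "x = 0" by (simp add: prod_eq_iff)
  next
    assume "x = 0"
    then show "cinner x x = 0"
      using cinner_self_eq_zero[of "0::'a"] cinner_self_eq_zero[of "0::'b"]
      by (simp add: cinner_prod_def zero_prod_def)
  qed
qed

end

instance prod :: (chilbert_space, chilbert_space) chilbert_space ..

definition op_matrix :: "('a \<Rightarrow> 'a) \<Rightarrow> ('a \<Rightarrow> 'a) \<Rightarrow> ('a \<Rightarrow> 'a) \<Rightarrow> ('a \<Rightarrow> 'a)
    \<Rightarrow> ('a::complex_inner \<times> 'a \<Rightarrow> 'a \<times> 'a)" where
  "op_matrix T11 T12 T21 T22 = (\<lambda>(x, y). (T11 x + T12 y, T21 x + T22 y))"

end

theory Submission
  imports Defs
begin

(* For |u| = 1, replacing X by uX multiplies both operators on the right-hand side by u, which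
   changes neither their norm nor their numerical radius. Rotating X by the phase of <A*XBx, x>
   it therefore suffices to bound Re <A*XBx, x> = <Sx, x> / 2, where S = A*XB + B*X*A is
   self-adjoint. For T x = (Ax, Bx) one computes
     Re <TSx, Tx> = Re <M Tx, Tx> + Re <N Bx, Ax> <= (w(M) + ||N||/2) ||Tx||^2,
   with M the block-diagonal operator and N = AA*X + XBB*. The top mu of the numerical range of
   S is an approximate eigenvalue: along approximate eigenvectors x, TSx is close to mu Tx while
   ||Tx|| stays away from 0 because ||Sx|| <= C ||Tx||. Hence mu <= w(M) + ||N||/2. *)

section \<open>Complex inner product spaces\<close>

lemma scaleC_zero_right [simp]: "scaleC c (0::'a::complex_inner) = 0"
  by (metis add_cancel_right_right scaleC_add_right)

lemma scaleC_zero_left [simp]: "scaleC 0 (x::'a::complex_inner) = 0"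
  using scaleR_scaleC[of 0 x] by simp

lemma cinner_add_right: "cinner x (y + z) = cinner x y + cinner (x::'a::complex_inner) z"
  by (metis cinner_commute cinner_add_left complex_cnj_add)

lemma cinner_scaleC_right: "cinner x (scaleC c y) = c * cinner (x::'a::complex_inner) y"
  by (metis cinner_commute cinner_scaleC_left complex_cnj_mult complex_cnj_cnj)

lemma cinner_zero_left [simp]: "cinner 0 (x::'a::complex_inner) = 0"
  using cinner_scaleC_left[of 0 x x] by simp

lemma cinner_zero_right [simp]: "cinner (x::'a::complex_inner) 0 = 0"
  using cinner_scaleC_right[of x 0 x] by simp

lemma cinner_minus_left: "cinner (- x) (y::'a::complex_inner) = - cinner x y"
  by (metis add_eq_0_iff cinner_add_left cinner_zero_left neg_eq_iff_add_eq_0)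

lemma cinner_minus_right: "cinner x (- y::'a::complex_inner) = - cinner x y"
  by (metis add_eq_0_iff cinner_add_right cinner_zero_right neg_eq_iff_add_eq_0)

lemma cinner_diff_left: "cinner (x - y) (z::'a::complex_inner) = cinner x z - cinner y z"
  by (metis diff_conv_add_uminus cinner_add_left cinner_minus_left)

lemma cinner_diff_right: "cinner x (y - z::'a::complex_inner) = cinner x y - cinner x z"
  by (metis diff_conv_add_uminus cinner_add_right cinner_minus_right)

lemma cinner_scaleR_left: "cinner (scaleR r x) (y::'a::complex_inner) = of_real r * cinner x y"
  by (simp add: scaleR_scaleC cinner_scaleC_left)

lemma cinner_scaleR_right: "cinner x (scaleR r y::'a::complex_inner) = of_real r * cinner x y"
  by (simp add: scaleR_scaleC cinner_scaleC_right)

lemma Re_cinner_self: "Re (cinner x (x::'a::complex_inner)) = (norm x)\<^sup>2"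
  by (simp add: cinner_self_eq_norm2)

lemma Re_cinner_commute: "Re (cinner y x) = Re (cinner x (y::'a::complex_inner))"
  by (metis cinner_commute complex_cnj_cnj cnj.sel(1))

lemma norm_scaleC: "norm (scaleC c (x::'a::complex_inner)) = cmod c * norm x"
proof -
  have "(norm (scaleC c x))\<^sup>2 = Re ((cnj c * c) * cinner x x)"
    by (metis Re_cinner_self cinner_scaleC_left cinner_scaleC_right mult.assoc)
  also have "cnj c * c = of_real ((cmod c)\<^sup>2)"
    by (metis complex_norm_square mult.commute)
  finally have "(norm (scaleC c x))\<^sup>2 = (cmod c * norm x)\<^sup>2"
    by (simp add: Re_cinner_self power_mult_distrib)
  then show ?thesis
    by (simp add: power2_eq_iff_nonneg)
qed

lemma norm_diff_sq:
  "(norm (x - y))\<^sup>2 = (norm x)\<^sup>2 + (norm y)\<^sup>2 - 2 * Re (cinner x (y::'a::complex_inner))"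
  using Re_cinner_self[of "x - y"] Re_cinner_commute[of y x]
  by (simp add: cinner_diff_left cinner_diff_right Re_cinner_self)

lemma parallelogram_law:
  "(norm (x + y))\<^sup>2 + (norm (x - y))\<^sup>2 = 2 * (norm x)\<^sup>2 + 2 * (norm (y::'a::complex_inner))\<^sup>2"
  using norm_diff_sq[of x "- y"] norm_diff_sq[of x y] by (simp add: cinner_minus_right)

lemma norm_cinner_le: "cmod (cinner x y) \<le> norm x * norm (y::'a::complex_inner)"
proof (cases "x = 0")
  case False
  define c where "c = cinner x y / of_real ((norm x)\<^sup>2)"
  have "0 \<le> (norm (y - scaleC c x))\<^sup>2"
    by simp
  also have "\<dots> = (norm y)\<^sup>2 - (cmod (cinner x y))\<^sup>2 / (norm x)\<^sup>2"
  proof -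
    have "cinner y (scaleC c x) = of_real ((cmod (cinner x y))\<^sup>2 / (norm x)\<^sup>2)"
      by (simp add: c_def cinner_scaleC_right cinner_commute[of y x] complex_norm_square
          flip: of_real_power)
    moreover have "(norm (scaleC c x))\<^sup>2 = (cmod (cinner x y))\<^sup>2 / (norm x)\<^sup>2"
      using False by (simp add: c_def norm_scaleC norm_divide norm_power norm_mult power2_eq_square)
    ultimately show ?thesis
      by (simp add: norm_diff_sq)
  qed
  finally have "(cmod (cinner x y))\<^sup>2 \<le> (norm x * norm y)\<^sup>2"
    using False by (simp add: field_simps power_mult_distrib)
  then show ?thesis
    by (simp add: power2_le_iff_abs_le)
qed simp

lemma Re_cinner_le: "Re (cinner x y) \<le> norm x * norm (y::'a::complex_inner)"
  using norm_cinner_le[of x y] complex_Re_le_cmod[of "cinner x y"] by linarith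

lemma cinner_eqI: "(\<And>x. cinner x a = cinner x b) \<Longrightarrow> a = (b::'a::complex_inner)"
  by (metis cinner_diff_right cinner_self_eq_zero diff_eq_diff_eq diff_self)

lemma bounded_linear_cinner_right: "bounded_linear (cinner (y::'a::complex_inner))"
proof (rule bounded_linear_intro[where K = "norm y"])
  show "cmod (cinner y x) \<le> norm x * norm y" for x
    using norm_cinner_le[of y x] by (simp add: mult.commute)
qed (simp_all add: cinner_add_right cinner_scaleR_right scaleR_conv_of_real)

section \<open>Bounded operators and their adjoints\<close>

lemma bounded_op_add: "bounded_op T \<Longrightarrow> T (x + y) = T x + T y"
  by (simp add: bounded_op_def bounded_linear.linear linear_add)

lemma bounded_op_scaleC: "bounded_op T \<Longrightarrow> T (scaleC c x) = scaleC c (T x)"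
  by (simp add: bounded_op_def)

lemma bounded_op_bounded_linear: "bounded_op T \<Longrightarrow> bounded_linear T"
  by (simp add: bounded_op_def)

lemma bounded_op_bound:
  assumes "bounded_op T"
  obtains K where "0 < K" "\<And>x. norm (T x) \<le> K * norm x"
  using bounded_linear.pos_bounded[OF bounded_op_bounded_linear[OF assms]]
  by (metis mult.commute)

lemma bounded_op_compose: "bounded_op S \<Longrightarrow> bounded_op T \<Longrightarrow> bounded_op (\<lambda>x. S (T x))"
  by (simp add: bounded_op_def bounded_linear_compose)

lemma bounded_op_comp: "bounded_op S \<Longrightarrow> bounded_op T \<Longrightarrow> bounded_op (S \<circ> T)"
  using bounded_op_compose[of S T] by (simp add: comp_def)

lemma bounded_op_zero: "bounded_op (\<lambda>_. 0)"
  by (simp add: bounded_op_def)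

lemma bounded_op_plus: "bounded_op S \<Longrightarrow> bounded_op T \<Longrightarrow> bounded_op (\<lambda>x. S x + T x)"
  by (simp add: bounded_op_def bounded_linear_add scaleC_add_right)

lemma bounded_op_scaleC_left:
  assumes "bounded_op T"
  shows "bounded_op (\<lambda>x. scaleC c (T x))"
proof -
  obtain K where K: "\<And>x. norm (T x) \<le> K * norm x"
    using bounded_op_bound[OF assms] by blast
  have "bounded_linear (\<lambda>x. scaleC c (T x))"
  proof (rule bounded_linear_intro[where K = "cmod c * K"])
    show "norm (scaleC c (T x)) \<le> norm x * (cmod c * K)" for x
      using mult_left_mono[OF K[of x], of "cmod c"] by (simp add: norm_scaleC algebra_simps)
  qed (simp_all add: bounded_op_add[OF assms] bounded_op_scaleC[OF assms] scaleC_add_right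
      scaleR_scaleC scaleC_scaleC mult.commute)
  then show ?thesis
    using assms by (simp add: bounded_op_def bounded_op_scaleC scaleC_scaleC mult.commute)
qed

lemma norm_diff_sq_le_midpoint:
  fixes w a b :: "'a::complex_inner"
  assumes "d \<le> norm (w - scaleR (1/2) (a + b))" and "0 \<le> d"
  shows "(norm (a - b))\<^sup>2 \<le> 2 * (norm (w - a))\<^sup>2 + 2 * (norm (w - b))\<^sup>2 - 4 * d\<^sup>2"
proof -
  have "(w - a) + (w - b) = scaleR 2 (w - scaleR (1/2) (a + b))"
    by (simp add: algebra_simps scaleR_2)
  then have "2 * d \<le> norm ((w - a) + (w - b))"
    using assms(1) by simp
  then have "(2 * d)\<^sup>2 \<le> (norm ((w - a) + (w - b)))\<^sup>2"
    by (rule power_mono) (simp add: \<open>0 \<le> d\<close>)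
  then show ?thesis
    using parallelogram_law[of "w - a" "w - b"]
    by (simp add: norm_minus_commute power_mult_distrib)
qed

lemma minimizing_sequence_Cauchy:
  fixes xs :: "nat \<Rightarrow> 'a::complex_inner"
  assumes spread: "\<And>m n. (norm (xs m - xs n))\<^sup>2 \<le> 2 * (norm (w - xs m))\<^sup>2 + 2 * (norm (w - xs n))\<^sup>2 - 4 * d\<^sup>2"
    and approx: "\<And>n. (norm (w - xs n))\<^sup>2 < d\<^sup>2 + 1 / Suc n"
  shows "Cauchy xs"
proof (rule CauchyI)
  fix e :: real
  assume "0 < e"
  then obtain N where "inverse (Suc N) < e\<^sup>2 / 4"
    using reals_Archimedean[of "e\<^sup>2 / 4"] by auto
  define \<delta> where "\<delta> = 1 / real (Suc N)"
  have "\<delta> < e\<^sup>2 / 4"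
    using \<open>inverse (Suc N) < e\<^sup>2 / 4\<close> by (simp add: \<delta>_def inverse_eq_divide)
  have close: "(norm (w - xs k))\<^sup>2 < d\<^sup>2 + \<delta>" if "N \<le> k" for k
  proof -
    have "1 / real (Suc k) \<le> \<delta>"
      using that by (simp add: \<delta>_def frac_le)
    then show ?thesis
      using approx[of k] by linarith
  qed
  have "norm (xs m - xs n) < e" if "N \<le> m" "N \<le> n" for m n
  proof -
    have "(norm (xs m - xs n))\<^sup>2 < e\<^sup>2"
      using spread[of m n] close[OF \<open>N \<le> m\<close>] close[OF \<open>N \<le> n\<close>] \<open>\<delta> < e\<^sup>2 / 4\<close> by linarith
    then show ?thesis
      using \<open>0 < e\<close> by (simp add: power_less_imp_less_base)
  qed
  then show "\<exists>N. \<forall>m\<ge>N. \<forall>n\<ge>N. norm (xs m - xs n) < e"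
    by blast
qed

lemma nearest_point_exists:
  fixes w :: "'a::chilbert_space"
  assumes "closed Z" and "z0 \<in> Z"
    and midpoint: "\<And>a b. a \<in> Z \<Longrightarrow> b \<in> Z \<Longrightarrow> scaleR (1/2) (a + b) \<in> Z"
  shows "\<exists>z\<in>Z. \<forall>m\<in>Z. norm (w - z) \<le> norm (w - m)"
proof -
  define d where "d = Inf ((\<lambda>m. norm (w - m)) ` Z)"
  have bdd: "bdd_below ((\<lambda>m. norm (w - m)) ` Z)"
    by (rule bdd_belowI[of _ 0]) auto
  have d_le: "d \<le> norm (w - m)" if "m \<in> Z" for m
    unfolding d_def using that bdd by (simp add: cInf_lower)
  have "0 \<le> d"
    unfolding d_def using \<open>z0 \<in> Z\<close> by (auto intro: cInf_greatest)
  have "\<exists>m\<in>Z. (norm (w - m))\<^sup>2 < d\<^sup>2 + 1 / Suc n" for n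
  proof -
    have "d < sqrt (d\<^sup>2 + 1 / Suc n)"
      by (rule real_less_rsqrt) simp
    then obtain m where m: "m \<in> Z" "norm (w - m) < sqrt (d\<^sup>2 + 1 / Suc n)"
      using cInf_lessD[of "(\<lambda>m. norm (w - m)) ` Z"] \<open>z0 \<in> Z\<close> unfolding d_def by blast
    have "(norm (w - m))\<^sup>2 < (sqrt (d\<^sup>2 + 1 / Suc n))\<^sup>2"
      using m(2) by (rule power_strict_mono) simp_all
    then show ?thesis
      using m(1) by auto
  qed
  then obtain mm where mm: "\<And>n. mm n \<in> Z" "\<And>n. (norm (w - mm n))\<^sup>2 < d\<^sup>2 + 1 / Suc n"
    by metis
  have "Cauchy mm"
    using norm_diff_sq_le_midpoint[OF d_le[OF midpoint[OF mm(1) mm(1)]] \<open>0 \<le> d\<close>] mm(2)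
    by (rule minimizing_sequence_Cauchy)
  then obtain z where lim: "mm \<longlonglongrightarrow> z"
    using Cauchy_convergent_iff convergent_def by blast
  have "z \<in> Z"
    using \<open>closed Z\<close> mm(1) lim by (rule closed_sequentially)
  have "(norm (w - z))\<^sup>2 \<le> d\<^sup>2 + 0"
  proof (rule LIMSEQ_le)
    show "(\<lambda>n. (norm (w - mm n))\<^sup>2) \<longlonglongrightarrow> (norm (w - z))\<^sup>2"
      by (intro tendsto_power tendsto_norm tendsto_diff tendsto_const lim)
    show "(\<lambda>n. d\<^sup>2 + 1 / Suc n) \<longlonglongrightarrow> d\<^sup>2 + 0"
      using LIMSEQ_inverse_real_of_nat by (intro tendsto_add tendsto_const) (simp add: inverse_eq_divide)
    show "\<exists>N. \<forall>n\<ge>N. (norm (w - mm n))\<^sup>2 \<le> d\<^sup>2 + 1 / Suc n"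
      by (intro exI[of _ 0] allI impI less_imp_le mm(2))
  qed
  then have "norm (w - z) \<le> d"
    using \<open>0 \<le> d\<close> by (auto intro: power2_le_imp_le)
  then show ?thesis
    using \<open>z \<in> Z\<close> d_le by (meson order_trans)
qed

lemma nearest_point_orthogonal:
  fixes Z :: "'a::complex_inner set"
  assumes add: "\<And>a b. a \<in> Z \<Longrightarrow> b \<in> Z \<Longrightarrow> a + b \<in> Z"
    and scale: "\<And>c a. a \<in> Z \<Longrightarrow> scaleC c a \<in> Z"
    and nearest: "z \<in> Z" "\<And>m. m \<in> Z \<Longrightarrow> norm (w - z) \<le> norm (w - m)"
    and "m \<in> Z"
  shows "cinner (w - z) m = 0"
proof (cases "m = 0")
  case False
  define c where "c = cinner (w - z) m"
  define s where "s = cnj c / of_real ((norm m)\<^sup>2)"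
  have "norm (w - z) \<le> norm ((w - z) - scaleC s m)"
    using nearest(2)[OF add[OF nearest(1) scale[OF \<open>m \<in> Z\<close>]]] by (simp add: diff_diff_add)
  then have "(norm (w - z))\<^sup>2 \<le> (norm ((w - z) - scaleC s m))\<^sup>2"
    by (rule power_mono) simp
  also have "\<dots> = (norm (w - z))\<^sup>2 - (cmod c)\<^sup>2 / (norm m)\<^sup>2"
  proof -
    have "cinner (w - z) (scaleC s m) = of_real ((cmod c)\<^sup>2 / (norm m)\<^sup>2)"
      by (simp add: s_def c_def cinner_scaleC_right complex_norm_square mult.commute
          flip: of_real_power)
    moreover have "(norm (scaleC s m))\<^sup>2 = (cmod c)\<^sup>2 / (norm m)\<^sup>2"
      using False by (simp add: s_def norm_scaleC norm_divide norm_power norm_mult power2_eq_square)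
    ultimately show ?thesis
      by (simp add: norm_diff_sq)
  qed
  finally show ?thesis
    using False by (simp add: c_def divide_le_0_iff)
qed simp

lemma riesz_representation:
  fixes f :: "'a::chilbert_space \<Rightarrow> complex"
  assumes lin: "bounded_linear f" and hom: "\<And>c x. f (scaleC c x) = c * f x"
  shows "\<exists>v. \<forall>x. f x = cinner v x"
proof (cases "\<forall>x. f x = 0")
  case True
  then show ?thesis
    by (intro exI[of _ 0]) simp
next
  case False
  then obtain w where "f w \<noteq> 0"
    by blast
  interpret f: bounded_linear f
    by (fact lin)
  define Z where "Z = {m. f m = 0}"
  have "closed Z"
    unfolding Z_def by (intro closed_Collect_eq linear_continuous_on[OF lin] continuous_on_const)
  moreover have "0 \<in> Z"
    by (simp add: Z_def f.zero)
  moreover have "scaleR (1/2) (a + b) \<in> Z" if "a \<in> Z" "b \<in> Z" for a b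
    using that by (simp add: Z_def f.add f.scaleR)
  ultimately obtain z where z: "z \<in> Z" "\<And>m. m \<in> Z \<Longrightarrow> norm (w - z) \<le> norm (w - m)"
    using nearest_point_exists[of Z 0 w] by blast
  define e where "e = w - z"
  have "f e \<noteq> 0"
    using \<open>f w \<noteq> 0\<close> z(1) by (simp add: e_def Z_def f.diff)
  then have "cinner e e \<noteq> 0"
    by (auto simp: cinner_self_eq_zero f.zero)
  have orth: "cinner e m = 0" if "f m = 0" for m
    using nearest_point_orthogonal[of Z z w m] z that by (simp add: Z_def e_def f.add hom)
  show ?thesis
  proof (intro exI allI)
    fix x
    have "f (scaleC (f x) e - scaleC (f e) x) = 0"
      by (simp add: f.diff hom mult.commute)
    then have "cinner e (scaleC (f x) e - scaleC (f e) x) = 0"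
      by (rule orth)
    then have "f x * cinner e e = f e * cinner e x"
      by (simp add: cinner_diff_right cinner_scaleC_right)
    then show "f x = cinner (scaleC (cnj (f e / cinner e e)) e) x"
      using \<open>cinner e e \<noteq> 0\<close> by (simp add: cinner_scaleC_left nonzero_eq_divide_eq)
  qed
qed

lemma cinner_cadjoint:
  fixes T :: "'a::chilbert_space \<Rightarrow> 'a"
  assumes "bounded_op T"
  shows "cinner (T x) y = cinner x (cadjoint T y)"
proof -
  have "\<exists>v. \<forall>x. cinner (T x) y = cinner x v" for y
  proof -
    have "bounded_linear (\<lambda>x. cinner y (T x))"
      using bounded_linear_compose[OF bounded_linear_cinner_right bounded_op_bounded_linear[OF assms]] .
    then obtain v where v: "\<forall>x. cinner y (T x) = cinner v x"
      using riesz_representation[of "\<lambda>x. cinner y (T x)"]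
      by (auto simp: bounded_op_scaleC[OF assms] cinner_scaleC_right)
    have "cinner (T x) y = cinner x v" for x
      using v cinner_commute[of "T x" y] cinner_commute[of x v] by simp
    then show ?thesis
      by blast
  qed
  then obtain S where S: "\<And>x y. cinner (T x) y = cinner x (S y)"
    by metis
  have "\<exists>!S. \<forall>x y. cinner (T x) y = cinner x (S y)"
  proof
    show "\<forall>x y. cinner (T x) y = cinner x (S y)"
      using S by blast
    show "S' = S" if "\<forall>x y. cinner (T x) y = cinner x (S' y)" for S'
    proof
      show "S' y = S y" for y
        by (rule cinner_eqI) (use that[rule_format, of _ y] S[of _ y] in simp)
    qed
  qed
  then have "\<forall>x y. cinner (T x) y = cinner x ((THE S. \<forall>x y. cinner (T x) y = cinner x (S y)) y)"
    by (rule theI')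
  then show ?thesis
    unfolding cadjoint_def by blast
qed

lemma cinner_cadjoint_left:
  fixes T :: "'a::chilbert_space \<Rightarrow> 'a"
  assumes "bounded_op T"
  shows "cinner (cadjoint T y) x = cinner y (T x)"
  using cinner_cadjoint[OF assms, of x y] cinner_commute[of "cadjoint T y" x] cinner_commute[of y "T x"]
  by simp

lemma bounded_op_cadjoint:
  fixes T :: "'a::chilbert_space \<Rightarrow> 'a"
  assumes "bounded_op T"
  shows "bounded_op (cadjoint T)"
proof -
  obtain K where "0 < K" and K: "\<And>x. norm (T x) \<le> K * norm x"
    using bounded_op_bound[OF assms] by blast
  have add: "cadjoint T (y + z) = cadjoint T y + cadjoint T z" for y z
    by (rule cinner_eqI) (simp add: cinner_cadjoint[OF assms, symmetric] cinner_add_right)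
  have hom: "cadjoint T (scaleC c y) = scaleC c (cadjoint T y)" for c y
    by (rule cinner_eqI) (simp add: cinner_cadjoint[OF assms, symmetric] cinner_scaleC_right)
  have bound: "norm (cadjoint T y) \<le> K * norm y" for y
  proof -
    have "(norm (cadjoint T y))\<^sup>2 = Re (cinner (T (cadjoint T y)) y)"
      by (simp add: cinner_cadjoint[OF assms] Re_cinner_self)
    also have "\<dots> \<le> norm (T (cadjoint T y)) * norm y"
      by (rule Re_cinner_le)
    also have "\<dots> \<le> K * norm (cadjoint T y) * norm y"
      by (rule mult_right_mono[OF K]) simp
    also have "\<dots> = norm (cadjoint T y) * (K * norm y)"
      by simp
    finally show ?thesis
      using \<open>0 < K\<close> by (cases "cadjoint T y = 0") (simp_all add: power2_eq_square)
  qed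
  have "bounded_linear (cadjoint T)"
    by (rule bounded_linear_intro[where K = K]) (simp_all add: add scaleR_scaleC hom bound mult.commute)
  then show ?thesis
    using hom by (simp add: bounded_op_def)
qed

lemma bounded_op_op_matrix:
  assumes "bounded_op T11" "bounded_op T12" "bounded_op T21" "bounded_op T22"
  shows "bounded_op (op_matrix T11 T12 T21 T22)"
proof -
  have "op_matrix T11 T12 T21 T22 = (\<lambda>p. (T11 (fst p) + T12 (snd p), T21 (fst p) + T22 (snd p)))"
    by (auto simp: op_matrix_def)
  moreover have "bounded_linear (\<lambda>p. (T11 (fst p) + T12 (snd p), T21 (fst p) + T22 (snd p)))"
    using assms unfolding bounded_op_def
    by (intro bounded_linear_Pair bounded_linear_add bounded_linear_compose[OF _ bounded_linear_fst]
        bounded_linear_compose[OF _ bounded_linear_snd]) auto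
  ultimately show ?thesis
    using assms by (simp add: bounded_op_def scaleC_prod_def scaleC_add_right)
qed

section \<open>Numerical radius\<close>

lemma quadratic_form_le_of_unit:
  fixes S :: "'a::complex_inner \<Rightarrow> 'a" and g :: "complex \<Rightarrow> real"
  assumes "linear S"
    and g_scale: "\<And>r z. 0 \<le> r \<Longrightarrow> g (of_real r * z) = r * g z"
    and unit: "\<And>x. norm x = 1 \<Longrightarrow> g (cinner (S x) x) \<le> K"
  shows "g (cinner (S x) x) \<le> K * (norm x)\<^sup>2"
proof (cases "x = 0")
  case True
  then show ?thesis
    using g_scale[of 0 0] linear_0[OF \<open>linear S\<close>] by simp
next
  case False
  define r where "r = 1 / norm x"
  have "g (cinner (S (scaleR r x)) (scaleR r x)) = r\<^sup>2 * g (cinner (S x) x)"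
    using g_scale[of "r\<^sup>2"]
    by (simp add: linear_scale[OF \<open>linear S\<close>] cinner_scaleR_left cinner_scaleR_right
        power2_eq_square mult.assoc r_def)
  moreover have "norm (scaleR r x) = 1"
    using False by (simp add: r_def)
  ultimately have "r\<^sup>2 * g (cinner (S x) x) \<le> K"
    using unit by metis
  then show ?thesis
    using False by (simp add: r_def field_simps)
qed

lemma numerical_radius_bdd_above:
  assumes "bounded_op T"
  shows "bdd_above (insert 0 {cmod (cinner (T x) x) | x. norm x = 1})"
proof -
  obtain K where K: "\<And>x. norm (T x) \<le> K * norm x"
    using bounded_op_bound[OF assms] by blast
  have "cmod (cinner (T x) x) \<le> max 0 K" if "norm x = 1" for x
    using norm_cinner_le[of "T x" x] K[of x] that by simp
  then show ?thesis
    by (auto intro: bdd_aboveI[of _ "max 0 K"])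
qed

lemma numerical_radius_nonneg: "bounded_op T \<Longrightarrow> 0 \<le> numerical_radius T"
  unfolding numerical_radius_def by (auto intro: cSup_upper numerical_radius_bdd_above)

lemma cinner_le_numerical_radius:
  assumes "bounded_op T"
  shows "cmod (cinner (T x) x) \<le> numerical_radius T * (norm x)\<^sup>2"
proof (rule quadratic_form_le_of_unit)
  show "linear T"
    using assms by (simp add: bounded_op_def bounded_linear.linear)
  show "cmod (cinner (T x) x) \<le> numerical_radius T" if "norm x = 1" for x
    unfolding numerical_radius_def using that
    by (intro cSup_upper numerical_radius_bdd_above[OF assms]) blast
qed (simp add: norm_mult)

lemma numerical_radius_le:
  assumes "0 \<le> V" and "\<And>x. norm x = 1 \<Longrightarrow> cmod (cinner (T x) x) \<le> V"
  shows "numerical_radius T \<le> V"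
  unfolding numerical_radius_def using assms by (auto intro: cSup_least)

lemma numerical_radius_scaleC:
  assumes "cmod u = 1"
  shows "numerical_radius (\<lambda>x. scaleC u (T x)) = numerical_radius T"
  using assms by (simp add: numerical_radius_def cinner_scaleC_left norm_mult)

lemma onorm_scaleC:
  assumes "cmod u = 1"
  shows "onorm (\<lambda>x. scaleC u (f x)) = onorm f"
  using assms by (simp add: onorm_def norm_scaleC)

section \<open>Self-adjoint operators\<close>

definition selfadjoint :: "('a::complex_inner \<Rightarrow> 'a) \<Rightarrow> bool" where
  "selfadjoint S \<longleftrightarrow> (\<forall>x y. cinner (S x) y = cinner x (S y))"

lemma positive_norm_sq_le:
  fixes R :: "'a::complex_inner \<Rightarrow> 'a"
  assumes "linear R" and "selfadjoint R"
    and pos: "\<And>v. 0 \<le> Re (cinner (R v) v)"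
    and bound: "\<And>v. norm (R v) \<le> L * norm v" and "0 < L"
  shows "(norm (R y))\<^sup>2 \<le> L * Re (cinner (R y) y)"
proof -
  define t where "t = 1 / L"
  have "Re (cinner (R (R y)) (R y)) \<le> L * (norm (R y))\<^sup>2"
    using Re_cinner_le[of "R (R y)" "R y"] mult_right_mono[OF bound[of "R y"], of "norm (R y)"]
    by (simp add: power2_eq_square mult.assoc)
  then have "t * t * Re (cinner (R (R y)) (R y)) \<le> t * (norm (R y))\<^sup>2"
    using \<open>0 < L\<close> mult_left_mono[of _ _ "t * t"] by (fastforce simp: t_def power2_eq_square)
  moreover have "cinner (R (R y)) y = cinner (R y) (R y)"
    using \<open>selfadjoint R\<close> by (simp add: selfadjoint_def)
  then have "Re (cinner (R (y - scaleR t (R y))) (y - scaleR t (R y)))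
      = Re (cinner (R y) y) - 2 * t * (norm (R y))\<^sup>2 + t * t * Re (cinner (R (R y)) (R y))"
    by (simp add: linear_diff[OF \<open>linear R\<close>] linear_scale[OF \<open>linear R\<close>] cinner_diff_left
        cinner_diff_right cinner_scaleR_left cinner_scaleR_right Re_cinner_self algebra_simps)
  ultimately have "t * (norm (R y))\<^sup>2 \<le> Re (cinner (R y) y)"
    using pos[of "y - scaleR t (R y)"] by linarith
  then show ?thesis
    using \<open>0 < L\<close> by (simp add: t_def field_simps)
qed

lemma selfadjoint_maximizing_approx_eigenvector:
  fixes S :: "'a::complex_inner \<Rightarrow> 'a"
  assumes "bounded_op S" and "selfadjoint S"
    and upper: "\<And>x. Re (cinner (S x) x) \<le> \<mu> * (norm x)\<^sup>2"
    and unit: "\<And>n. norm (xs n) = 1"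
    and lim: "(\<lambda>n. Re (cinner (S (xs n)) (xs n))) \<longlonglongrightarrow> \<mu>"
  shows "(\<lambda>n. scaleR \<mu> (xs n) - S (xs n)) \<longlonglongrightarrow> 0"
proof -
  obtain K where "0 < K" and K: "\<And>x. norm (S x) \<le> K * norm x"
    using bounded_op_bound[OF assms(1)] by blast
  define R where "R = (\<lambda>y. scaleR \<mu> y - S y)"
  have "bounded_linear R"
    unfolding R_def using assms(1)
    by (intro bounded_linear_sub bounded_linear_scaleR_right bounded_op_bounded_linear)
  have Re_R: "Re (cinner (R y) y) = \<mu> * (norm y)\<^sup>2 - Re (cinner (S y) y)" for y
    by (simp add: R_def cinner_diff_left cinner_scaleR_left Re_cinner_self)
  have CS: "(norm (R y))\<^sup>2 \<le> (\<bar>\<mu>\<bar> + K) * Re (cinner (R y) y)" for y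
  proof (rule positive_norm_sq_le)
    show "linear R"
      using \<open>bounded_linear R\<close> by (rule bounded_linear.linear)
    show "selfadjoint R"
      using \<open>selfadjoint S\<close>
      by (simp add: selfadjoint_def R_def cinner_diff_left cinner_diff_right cinner_scaleR_left
          cinner_scaleR_right)
    show "0 \<le> Re (cinner (R v) v)" for v
      using upper[of v] by (simp add: Re_R)
    show "norm (R v) \<le> (\<bar>\<mu>\<bar> + K) * norm v" for v
      using norm_triangle_ineq4[of "scaleR \<mu> v" "S v"] K[of v] by (simp add: R_def algebra_simps)
  qed (use \<open>0 < K\<close> in simp)
  have gap: "(\<lambda>n. \<mu> - Re (cinner (S (xs n)) (xs n))) \<longlonglongrightarrow> 0"
    using tendsto_diff[OF tendsto_const lim, of \<mu>] by simp
  have bound: "norm (R (xs n)) \<le> sqrt ((\<bar>\<mu>\<bar> + K) * (\<mu> - Re (cinner (S (xs n)) (xs n))))" for n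
    using CS[of "xs n"] unit[of n] by (intro real_le_rsqrt) (simp add: Re_R)
  show ?thesis
  proof (rule Lim_null_comparison)
    show "\<forall>\<^sub>F n in sequentially.
        norm (scaleR \<mu> (xs n) - S (xs n)) \<le> sqrt ((\<bar>\<mu>\<bar> + K) * (\<mu> - Re (cinner (S (xs n)) (xs n))))"
      using bound by (simp add: R_def)
    show "(\<lambda>n. sqrt ((\<bar>\<mu>\<bar> + K) * (\<mu> - Re (cinner (S (xs n)) (xs n))))) \<longlonglongrightarrow> 0"
      using tendsto_real_sqrt[OF tendsto_mult_right_zero[OF gap, of "\<bar>\<mu>\<bar> + K"]] by simp
  qed
qed

lemma selfadjoint_approx_eigenvalue:
  fixes S :: "'a::complex_inner \<Rightarrow> 'a" and x0 :: 'a
  assumes "bounded_op S" and "selfadjoint S" and "norm x0 = 1"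
  obtains \<mu> xs where "\<And>x. norm x = 1 \<Longrightarrow> Re (cinner (S x) x) \<le> \<mu>"
    and "\<And>n. norm (xs n) = 1" and "(\<lambda>n. scaleR \<mu> (xs n) - S (xs n)) \<longlonglongrightarrow> 0"
proof -
  obtain K where K: "\<And>x. norm (S x) \<le> K * norm x"
    using bounded_op_bound[OF assms(1)] by blast
  define \<Sigma> where "\<Sigma> = {Re (cinner (S x) x) | x. norm x = 1}"
  define \<mu> where "\<mu> = Sup \<Sigma>"
  have "\<Sigma> \<noteq> {}"
    unfolding \<Sigma>_def using \<open>norm x0 = 1\<close> by blast
  have "Re (cinner (S x) x) \<le> K" if "norm x = 1" for x
    using Re_cinner_le[of "S x" x] K[of x] that by simp
  then have "bdd_above \<Sigma>"
    by (auto simp: \<Sigma>_def intro: bdd_aboveI[of _ K])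
  moreover have "Re (cinner (S x) x) \<in> \<Sigma>" if "norm x = 1" for x
    unfolding \<Sigma>_def using that by blast
  ultimately have upper: "Re (cinner (S x) x) \<le> \<mu>" if "norm x = 1" for x
    unfolding \<mu>_def using that by (simp add: cSup_upper)
  have "\<exists>x. norm x = 1 \<and> \<mu> - 1 / Suc n < Re (cinner (S x) x)" for n
    using less_cSupD[OF \<open>\<Sigma> \<noteq> {}\<close>, of "\<mu> - 1 / Suc n"] by (auto simp: \<mu>_def \<Sigma>_def)
  then obtain xs where xs: "\<And>n. norm (xs n) = 1" "\<And>n. \<mu> - 1 / Suc n < Re (cinner (S (xs n)) (xs n))"
    by metis
  have lim: "(\<lambda>n. Re (cinner (S (xs n)) (xs n))) \<longlonglongrightarrow> \<mu>"
  proof (rule tendsto_sandwich[of "\<lambda>n. \<mu> - 1 / Suc n" _ _ "\<lambda>_. \<mu>"])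
    show "(\<lambda>n. \<mu> - 1 / Suc n) \<longlonglongrightarrow> \<mu>"
      using tendsto_diff[OF tendsto_const LIMSEQ_inverse_real_of_nat, of \<mu>] by (simp add: inverse_eq_divide)
    show "\<forall>\<^sub>F n in sequentially. \<mu> - 1 / Suc n \<le> Re (cinner (S (xs n)) (xs n))"
      using xs(2) by (intro always_eventually allI less_imp_le)
    show "\<forall>\<^sub>F n in sequentially. Re (cinner (S (xs n)) (xs n)) \<le> \<mu>"
      using upper[OF xs(1)] by (intro always_eventually allI)
  qed simp
  have "linear S"
    using assms(1) by (simp add: bounded_op_bounded_linear bounded_linear.linear)
  then have upper_all: "Re (cinner (S x) x) \<le> \<mu> * (norm x)\<^sup>2" for x
    by (rule quadratic_form_le_of_unit) (simp_all add: upper)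
  show ?thesis
    using upper xs(1) selfadjoint_maximizing_approx_eigenvector[OF assms(1,2) upper_all xs(1) lim]
    by (rule that)
qed

(* Used with mu the top of the numerical range, a n = ||T x_n|| and r n = ||mu x_n - S x_n||
   along approximate eigenvectors x_n. *)
lemma le_of_vanishing_defect:
  fixes a r :: "nat \<Rightarrow> real"
  assumes "r \<longlonglongrightarrow> 0" and "0 \<le> K"
    and gap: "\<And>n. (\<mu> - K) * (a n)\<^sup>2 \<le> D * r n"
    and lower: "\<And>n. \<mu> \<le> C * a n + r n"
  shows "\<mu> \<le> K"
proof (rule ccontr)
  assume "\<not> \<mu> \<le> K"
  then have "0 < \<mu> - K" and "0 < \<mu>"
    using \<open>0 \<le> K\<close> by auto
  have "\<forall>\<^sub>F n in sequentially. r n < \<mu> / 2"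
    using order_tendstoD(2)[OF \<open>r \<longlonglongrightarrow> 0\<close>, of "\<mu> / 2"] \<open>0 < \<mu>\<close> by simp
  then have "\<forall>\<^sub>F n in sequentially. \<mu>\<^sup>2 / 4 \<le> C\<^sup>2 * D / (\<mu> - K) * r n"
  proof (rule eventually_mono)
    fix n
    assume "r n < \<mu> / 2"
    then have "\<mu> / 2 \<le> C * a n"
      using lower[of n] by linarith
    then have "(\<mu> / 2)\<^sup>2 \<le> (C * a n)\<^sup>2"
      by (rule power_mono) (use \<open>0 < \<mu>\<close> in simp)
    also have "\<dots> = C\<^sup>2 * (a n)\<^sup>2"
      by (simp add: power_mult_distrib)
    also have "\<dots> \<le> C\<^sup>2 * (D * r n / (\<mu> - K))"
      using gap[of n] \<open>0 < \<mu> - K\<close> by (intro mult_left_mono) (simp_all add: pos_le_divide_eq mult.commute)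
    finally show "\<mu>\<^sup>2 / 4 \<le> C\<^sup>2 * D / (\<mu> - K) * r n"
      by (simp add: power_divide)
  qed
  moreover have "(\<lambda>n. C\<^sup>2 * D / (\<mu> - K) * r n) \<longlonglongrightarrow> 0"
    by (rule tendsto_mult_right_zero[OF \<open>r \<longlonglongrightarrow> 0\<close>])
  ultimately have "\<mu>\<^sup>2 / 4 \<le> 0"
    using tendsto_lowerbound trivial_limit_sequentially by blast
  moreover have "0 < \<mu>\<^sup>2"
    using \<open>0 < \<mu>\<close> by simp
  ultimately show False
    by linarith
qed

lemma selfadjoint_Re_cinner_le_transfer:
  fixes S :: "'a::complex_inner \<Rightarrow> 'a" and T :: "'a \<Rightarrow> 'b::complex_inner"
  assumes "bounded_op S" and "selfadjoint S" and "bounded_linear T" and "0 \<le> K"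
    and transfer: "\<And>x. Re (cinner (T (S x)) (T x)) \<le> K * (norm (T x))\<^sup>2"
    and dominated: "\<And>x. norm (S x) \<le> C * norm (T x)"
  shows "Re (cinner (S x) x) \<le> K * (norm x)\<^sup>2"
proof (rule quadratic_form_le_of_unit[where g = Re])
  interpret T: bounded_linear T
    by (fact \<open>bounded_linear T\<close>)
  obtain c where "0 < c" and c: "\<And>x. norm (T x) \<le> c * norm x"
    using T.pos_bounded by (auto simp: mult.commute)
  show "linear S"
    using assms(1) by (simp add: bounded_op_bounded_linear bounded_linear.linear)
  show "Re (cinner (S x0) x0) \<le> K" if x0: "norm x0 = 1" for x0
  proof -
    obtain \<mu> xs where upper: "\<And>x. norm x = 1 \<Longrightarrow> Re (cinner (S x) x) \<le> \<mu>"
      and unit: "\<And>n. norm (xs n) = 1" and lim: "(\<lambda>n. scaleR \<mu> (xs n) - S (xs n)) \<longlonglongrightarrow> 0"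
      using selfadjoint_approx_eigenvalue[OF assms(1,2) x0] by blast
    define r where "r n = norm (scaleR \<mu> (xs n) - S (xs n))" for n
    have "\<mu> \<le> K"
    proof (rule le_of_vanishing_defect)
      show "r \<longlonglongrightarrow> 0"
        unfolding r_def by (rule tendsto_norm_zero[OF lim])
      show "(\<mu> - K) * (norm (T (xs n)))\<^sup>2 \<le> c\<^sup>2 * r n" for n
      proof -
        have "Re (cinner (T (S (xs n))) (T (xs n)))
            = \<mu> * (norm (T (xs n)))\<^sup>2 - Re (cinner (T (scaleR \<mu> (xs n) - S (xs n))) (T (xs n)))"
          by (simp add: T.diff T.scaleR cinner_diff_left cinner_scaleR_left Re_cinner_self)
        moreover have "Re (cinner (T (scaleR \<mu> (xs n) - S (xs n))) (T (xs n)))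
            \<le> norm (T (scaleR \<mu> (xs n) - S (xs n))) * norm (T (xs n))"
          by (rule Re_cinner_le)
        moreover have "\<dots> \<le> (c * r n) * (c * 1)"
          using c[of "scaleR \<mu> (xs n) - S (xs n)"] c[of "xs n"] unit[of n] \<open>0 < c\<close>
          by (intro mult_mono) (simp_all add: r_def)
        ultimately show ?thesis
          using transfer[of "xs n"] by (simp add: power2_eq_square algebra_simps)
      qed
      show "\<mu> \<le> C * norm (T (xs n)) + r n" for n
        using norm_triangle_ineq2[of "scaleR \<mu> (xs n)" "S (xs n)"] dominated[of "xs n"] unit[of n]
        by (simp add: r_def)
    qed (fact \<open>0 \<le> K\<close>)
    then show ?thesis
      using upper[OF x0] by linarith
  qed
qed (simp_all add: norm_mult)

lemma Re_cinner_sandwich_pair: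
  fixes A B X :: "'a::chilbert_space \<Rightarrow> 'a"
  assumes A: "bounded_op A" and B: "bounded_op B" and X: "bounded_op X"
  defines "S \<equiv> \<lambda>x. cadjoint A (X (B x)) + cadjoint B (cadjoint X (A x))"
    and "M \<equiv> op_matrix (X \<circ> B \<circ> cadjoint A) (\<lambda>_. 0) (\<lambda>_. 0) (B \<circ> cadjoint A \<circ> X)"
    and "N \<equiv> \<lambda>x. A (cadjoint A (X x)) + X (B (cadjoint B x))"
  shows "Re (cinner (A (S x)) (A x)) + Re (cinner (B (S x)) (B x))
    = Re (cinner (M (A x, B x)) (A x, B x)) + Re (cinner (N (B x)) (A x))"
proof -
  have "cinner (A (cadjoint B (cadjoint X q))) q = cinner q (X (B (cadjoint A q)))" for q
    by (simp add: cinner_cadjoint[OF A] cinner_cadjoint_left[OF B] cinner_cadjoint_left[OF X])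
  moreover have "cinner (B (cadjoint B (cadjoint X q))) p = cinner q (X (B (cadjoint B p)))" for p q
    by (simp add: cinner_cadjoint[OF B] cinner_cadjoint_left[OF B] cinner_cadjoint_left[OF X])
  ultimately show ?thesis
    by (simp add: S_def M_def N_def op_matrix_def cinner_prod_def bounded_op_add[OF A]
        bounded_op_add[OF B] cinner_add_left Re_cinner_commute[of _ "A x"])
qed

lemma bounded_op_sandwich_terms:
  fixes A B X :: "'a::chilbert_space \<Rightarrow> 'a"
  assumes A: "bounded_op A" and B: "bounded_op B" and X: "bounded_op X"
  shows "bounded_op (op_matrix (X \<circ> B \<circ> cadjoint A) (\<lambda>_. 0) (\<lambda>_. 0) (B \<circ> cadjoint A \<circ> X))"
    and "bounded_op (\<lambda>x. A (cadjoint A (X x)) + X (B (cadjoint B x)))"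
proof -
  have adj: "bounded_op (cadjoint A)" "bounded_op (cadjoint B)"
    using A B by (simp_all add: bounded_op_cadjoint)
  show "bounded_op (op_matrix (X \<circ> B \<circ> cadjoint A) (\<lambda>_. 0) (\<lambda>_. 0) (B \<circ> cadjoint A \<circ> X))"
    by (simp add: bounded_op_op_matrix bounded_op_comp bounded_op_zero A B X adj)
  show "bounded_op (\<lambda>x. A (cadjoint A (X x)) + X (B (cadjoint B x)))"
    by (rule bounded_op_plus[OF bounded_op_compose[OF A bounded_op_compose[OF adj(1) X]]
          bounded_op_compose[OF X bounded_op_compose[OF B adj(2)]]])
qed

lemma Re_cinner_sandwich_pair_le:
  fixes A B X :: "'a::chilbert_space \<Rightarrow> 'a"
  assumes A: "bounded_op A" and B: "bounded_op B" and X: "bounded_op X"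
  defines "S \<equiv> \<lambda>x. cadjoint A (X (B x)) + cadjoint B (cadjoint X (A x))"
    and "M \<equiv> op_matrix (X \<circ> B \<circ> cadjoint A) (\<lambda>_. 0) (\<lambda>_. 0) (B \<circ> cadjoint A \<circ> X)"
    and "N \<equiv> \<lambda>x. A (cadjoint A (X x)) + X (B (cadjoint B x))"
  shows "Re (cinner (A (S x)) (A x)) + Re (cinner (B (S x)) (B x))
    \<le> (numerical_radius M + onorm N / 2) * ((norm (A x))\<^sup>2 + (norm (B x))\<^sup>2)"
proof -
  have "bounded_op M" "bounded_op N"
    unfolding M_def N_def using A B X by (rule bounded_op_sandwich_terms)+
  have "(norm (A x, B x))\<^sup>2 = (norm (A x))\<^sup>2 + (norm (B x))\<^sup>2"
    by (simp add: norm_Pair)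
  then have M_le: "Re (cinner (M (A x, B x)) (A x, B x))
      \<le> numerical_radius M * ((norm (A x))\<^sup>2 + (norm (B x))\<^sup>2)"
    using complex_Re_le_cmod[of "cinner (M (A x, B x)) (A x, B x)"]
      cinner_le_numerical_radius[OF \<open>bounded_op M\<close>, of "(A x, B x)"] by simp
  have "0 \<le> onorm N"
    using onorm_pos_le[OF bounded_op_bounded_linear[OF \<open>bounded_op N\<close>]] .
  have "Re (cinner (N (B x)) (A x)) \<le> onorm N * norm (B x) * norm (A x)"
    using Re_cinner_le[of "N (B x)" "A x"]
      mult_right_mono[OF onorm[OF bounded_op_bounded_linear[OF \<open>bounded_op N\<close>], of "B x"],
        of "norm (A x)"]
    by simp
  also have "\<dots> \<le> onorm N / 2 * ((norm (A x))\<^sup>2 + (norm (B x))\<^sup>2)"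
    using mult_left_mono[OF sum_squares_bound[of "norm (B x)" "norm (A x)"], of "onorm N / 2"]
      \<open>0 \<le> onorm N\<close> by (simp add: add.commute mult.assoc)
  finally have N_le: "Re (cinner (N (B x)) (A x)) \<le> onorm N / 2 * ((norm (A x))\<^sup>2 + (norm (B x))\<^sup>2)" .
  have "Re (cinner (A (S x)) (A x)) + Re (cinner (B (S x)) (B x))
      = Re (cinner (M (A x, B x)) (A x, B x)) + Re (cinner (N (B x)) (A x))"
    unfolding S_def M_def N_def by (rule Re_cinner_sandwich_pair[OF A B X])
  also have "\<dots> \<le> (numerical_radius M + onorm N / 2) * ((norm (A x))\<^sup>2 + (norm (B x))\<^sup>2)"
    using M_le N_le by (simp add: distrib_right)
  finally show ?thesis .
qed

lemma selfadjoint_sandwich: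
  fixes A B X :: "'a::chilbert_space \<Rightarrow> 'a"
  assumes A: "bounded_op A" and B: "bounded_op B" and X: "bounded_op X"
  shows "selfadjoint (\<lambda>x. cadjoint A (X (B x)) + cadjoint B (cadjoint X (A x)))"
  by (simp add: selfadjoint_def cinner_add_left cinner_add_right cinner_cadjoint[OF A]
      cinner_cadjoint[OF B] cinner_cadjoint[OF X] cinner_cadjoint_left[OF A]
      cinner_cadjoint_left[OF B] cinner_cadjoint_left[OF X] add.commute)

lemma norm_sandwich_le_pair:
  fixes A B X :: "'a::chilbert_space \<Rightarrow> 'a"
  assumes A: "bounded_op A" and B: "bounded_op B" and X: "bounded_op X"
  obtains C where "\<And>x. norm (cadjoint A (X (B x)) + cadjoint B (cadjoint X (A x))) \<le> C * norm (A x, B x)"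
proof -
  have "bounded_op (\<lambda>v. cadjoint A (X v))" and "bounded_op (\<lambda>v. cadjoint B (cadjoint X v))"
    using bounded_op_compose bounded_op_cadjoint A B X by blast+
  then obtain c1 c2 where "0 < c1" and c1: "\<And>v. norm (cadjoint A (X v)) \<le> c1 * norm v"
    and "0 < c2" and c2: "\<And>v. norm (cadjoint B (cadjoint X v)) \<le> c2 * norm v"
    using bounded_op_bound by metis
  have "norm (cadjoint A (X (B x)) + cadjoint B (cadjoint X (A x))) \<le> (c1 + c2) * norm (A x, B x)" for x
  proof -
    have "norm (cadjoint A (X (B x)) + cadjoint B (cadjoint X (A x))) \<le> c1 * norm (B x) + c2 * norm (A x)"
      using norm_triangle_ineq c1[of "B x"] c2[of "A x"] by (rule order_trans[OF _ add_mono])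
    also have "\<dots> \<le> c1 * norm (A x, B x) + c2 * norm (A x, B x)"
      using \<open>0 < c1\<close> \<open>0 < c2\<close> by (intro add_mono mult_left_mono norm_snd_le norm_fst_le) simp_all
    finally show ?thesis
      by (simp add: distrib_right)
  qed
  then show ?thesis
    by (rule that)
qed

lemma Re_cinner_sandwich_le:
  fixes A B X :: "'a::chilbert_space \<Rightarrow> 'a"
  assumes A: "bounded_op A" and B: "bounded_op B" and X: "bounded_op X"
  defines "M \<equiv> op_matrix (X \<circ> B \<circ> cadjoint A) (\<lambda>_. 0) (\<lambda>_. 0) (B \<circ> cadjoint A \<circ> X)"
    and "N \<equiv> \<lambda>x. A (cadjoint A (X x)) + X (B (cadjoint B x))"
  shows "Re (cinner (cadjoint A (X (B x))) x) \<le> (1/2 * numerical_radius M + 1/4 * onorm N) * (norm x)\<^sup>2"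
proof -
  define S where "S = (\<lambda>x. cadjoint A (X (B x)) + cadjoint B (cadjoint X (A x)))"
  define K where "K = numerical_radius M + onorm N / 2"
  have "bounded_op S"
    unfolding S_def
    by (rule bounded_op_plus[OF bounded_op_compose[OF bounded_op_cadjoint[OF A] bounded_op_compose[OF X B]]
          bounded_op_compose[OF bounded_op_cadjoint[OF B] bounded_op_compose[OF bounded_op_cadjoint[OF X] A]]])
  have "selfadjoint S"
    unfolding S_def by (rule selfadjoint_sandwich[OF A B X])
  have "bounded_linear (\<lambda>x. (A x, B x))"
    using A B by (simp add: bounded_linear_Pair bounded_op_bounded_linear)
  have "0 \<le> K"
    using bounded_op_sandwich_terms[OF A B X]
    by (simp add: K_def M_def N_def numerical_radius_nonneg onorm_pos_le bounded_op_bounded_linear)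
  have transfer: "Re (cinner (A (S x), B (S x)) (A x, B x)) \<le> K * (norm (A x, B x))\<^sup>2" for x
    using Re_cinner_sandwich_pair_le[OF A B X, of x]
    by (simp add: S_def K_def M_def N_def cinner_prod_def norm_Pair)
  obtain C where dominated: "\<And>x. norm (S x) \<le> C * norm (A x, B x)"
    unfolding S_def using norm_sandwich_le_pair[OF A B X] by blast
  have "Re (cinner (S x) x) \<le> K * (norm x)\<^sup>2"
    by (rule selfadjoint_Re_cinner_le_transfer[OF \<open>bounded_op S\<close> \<open>selfadjoint S\<close>
          \<open>bounded_linear (\<lambda>x. (A x, B x))\<close> \<open>0 \<le> K\<close> transfer dominated])
  moreover have "cinner (cadjoint B (cadjoint X (A x))) x = cnj (cinner (cadjoint A (X (B x))) x)"
    by (simp add: cinner_cadjoint_left[OF B] cinner_cadjoint_left[OF X] cinner_cadjoint[OF A]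
        flip: cinner_commute)
  ultimately show ?thesis
    by (simp add: S_def K_def cinner_add_left algebra_simps)
qed

lemma sandwich_terms_rotate:
  fixes A B X :: "'a::chilbert_space \<Rightarrow> 'a"
  assumes A: "bounded_op A" and B: "bounded_op B"
  shows "op_matrix ((\<lambda>v. scaleC u (X v)) \<circ> B \<circ> cadjoint A) (\<lambda>_. 0) (\<lambda>_. 0)
      (B \<circ> cadjoint A \<circ> (\<lambda>v. scaleC u (X v)))
    = (\<lambda>z. scaleC u (op_matrix (X \<circ> B \<circ> cadjoint A) (\<lambda>_. 0) (\<lambda>_. 0) (B \<circ> cadjoint A \<circ> X) z))"
    and "(\<lambda>x. A (cadjoint A (scaleC u (X x))) + scaleC u (X (B (cadjoint B x))))
    = (\<lambda>x. scaleC u (A (cadjoint A (X x)) + X (B (cadjoint B x))))"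
  using bounded_op_scaleC[OF A] bounded_op_scaleC[OF B] bounded_op_scaleC[OF bounded_op_cadjoint[OF A]]
  by (auto simp: op_matrix_def scaleC_prod_def scaleC_add_right)

lemma rotate_to_norm:
  fixes z :: complex
  obtains u where "cmod u = 1" and "cnj u * z = of_real (cmod z)"
proof (cases "z = 0")
  case False
  have "cnj z * z = of_real ((cmod z)\<^sup>2)"
    using complex_norm_square[of z] by (simp add: mult.commute)
  then show ?thesis
    using False by (intro that[of "z / of_real (cmod z)"]) (simp_all add: norm_divide power2_eq_square)
qed (intro that[of 1], simp_all)

theorem mainTheorem7:
  fixes A B X :: "'a::chilbert_space \<Rightarrow> 'a"
  assumes "bounded_op A" and "bounded_op B" and "bounded_op X"
  shows "numerical_radius (cadjoint A \<circ> X \<circ> B)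
    \<le> 1/4 * onorm (\<lambda>x. A (cadjoint A (X x)) + X (B (cadjoint B x)))
      + 1/2 * numerical_radius
          (op_matrix (X \<circ> B \<circ> cadjoint A) (\<lambda>_. 0) (\<lambda>_. 0) (B \<circ> cadjoint A \<circ> X))"
    (is "_ \<le> 1/4 * onorm ?N + 1/2 * numerical_radius ?M")
proof (rule numerical_radius_le)
  show "0 \<le> 1/4 * onorm ?N + 1/2 * numerical_radius ?M"
    using bounded_op_sandwich_terms[OF assms]
    by (simp add: numerical_radius_nonneg onorm_pos_le bounded_op_bounded_linear)
  fix x :: 'a
  assume "norm x = 1"
  obtain u where "cmod u = 1" and u: "cnj u * cinner ((cadjoint A \<circ> X \<circ> B) x) x
      = of_real (cmod (cinner ((cadjoint A \<circ> X \<circ> B) x) x))"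
    using rotate_to_norm by blast
  have "cmod (cinner ((cadjoint A \<circ> X \<circ> B) x) x) = Re (cinner (cadjoint A (scaleC u (X (B x)))) x)"
    using u by (simp add: bounded_op_scaleC[OF bounded_op_cadjoint[OF assms(1)]] cinner_scaleC_left)
  also have "\<dots> \<le> 1/2 * numerical_radius ?M + 1/4 * onorm ?N"
    using Re_cinner_sandwich_le[OF assms(1,2) bounded_op_scaleC_left[OF assms(3)], of u x] \<open>norm x = 1\<close>
    by (simp add: sandwich_terms_rotate[OF assms(1,2)] numerical_radius_scaleC onorm_scaleC \<open>cmod u = 1\<close>)
  finally show "cmod (cinner ((cadjoint A \<circ> X \<circ> B) x) x) \<le> 1/4 * onorm ?N + 1/2 * numerical_radius ?M"
    by simp
qed

end
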